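(* Suppose the support of $F$ is $\{\underline{\theta},\overline{\theta}\}$. Then the unique robustly optimal test-fee structure has testing fee $\phi_t^*=0$, disclosure fee $\phi_d^*=\overline{\theta}-\mu$, and score distribution $G^*(s)=e^{(\underline{\theta}-\mu)/(\overline{\theta}-\mu)}$ for $s\in[\underline{\theta},\underline{\theta}+\overline{\theta}-\mu)$ and $G^*(s)=e^{(s-\overline{\theta})/(\overline{\theta}-\mu)}$ for $s\in[\underline{\theta}+\overline{\theta}-\mu,\overline{\theta}]$.
   Context: $F$ is a distribution of the asset value with lowest and highest support points $0\le\underline{\theta}<\overline{\theta}<\infty$ and mean $\mu$. $\Gamma(F)$ is the set of CDFs $G$ supported in $[\underline{\theta},\overline{\theta}]$ with $\int_{\underline{\theta}}^{x}G\le\int_{\underline{\theta}}^{x}F$ for all $x$ and equality at $x=\overline{\theta}$ (score distributions of unbiased tests). A test-fee structure is $(G,\phi)$ with $G\in\Gamma(F)$, $\phi=(\phi_t,\phi_d)\in\mathbb{R}^2$ (testing fee, disclosure fee); in the induced game an uninformed agent may pay $\phi_t$ to observe a score $s\sim G$ and then pay $\phi_d$ to verifiably disclose it to a competitive market which otherwise sees a null message. Define $\hat R(G,\phi,\tau)=\phi_t+\phi_d(1-G(\tau))$; (w-P): $\phi_t\le\int_{\mu+\phi_d}^{\overline{\theta}}[s-(\mu+\phi_d)]dG(s)$; (w-HE): $\tau-\phi_d=E_G[s\mid s\le\tau]$ and $\tau'-\phi_d\ge E_G[s\mid s\le\tau']$ for all $\tau'>\tau$. A test-fee structure $(G,\phi)$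 is robustly optimal if for some $\tau$, $(G,\phi,\tau)$ maximizes $\hat R$ over all $(G,\phi,\tau)\in\Gamma(F)\times\mathbb{R}^3$ satisfying (w-P) and (w-HE). *)

theory Defs
  imports "HOL-Analysis.Analysis"
begin

definition cdf_on :: "real \<Rightarrow> real \<Rightarrow> (real \<Rightarrow> real) \<Rightarrow> bool" where
  "cdf_on lo hi G \<longleftrightarrow> mono G \<and> (\<forall>x. continuous (at_right x) G)
     \<and> (\<forall>x. x < lo \<longrightarrow> G x = 0) \<and> (\<forall>x. hi \<le> x \<longrightarrow> G x = 1)"

definition cdf_mean :: "(real \<Rightarrow> real) \<Rightarrow> real" where
  "cdf_mean F = (LINT x|interval_measure F. x)"

text \<open>Gamma(F): score distributions of unbiased tests.\<close>
definition Gamma :: "real \<Rightarrow> real \<Rightarrow> (real \<Rightarrow> real) \<Rightarrow> (real \<Rightarrow> real) \<Rightarrow> bool" where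
  "Gamma lo hi F G \<longleftrightarrow> cdf_on lo hi G
     \<and> (\<forall>x. integral {lo..x} G \<le> integral {lo..x} F)
     \<and> integral {lo..hi} G = integral {lo..hi} F"

definition Rhat :: "(real \<Rightarrow> real) \<Rightarrow> real \<Rightarrow> real \<Rightarrow> real \<Rightarrow> real" where
  "Rhat G phi_t phi_d tau = phi_t + phi_d * (1 - G tau)"

text \<open>(w-P): the Stieltjes integral from mu+phi_d to hi of (s - (mu+phi_d)) dG(s).
  The integrand vanishes at s = mu+phi_d, so open/closed endpoint is immaterial.\<close>
definition wP :: "real \<Rightarrow> real \<Rightarrow> (real \<Rightarrow> real) \<Rightarrow> real \<Rightarrow> real \<Rightarrow> bool" where
  "wP hi mu G phi_t phi_d \<longleftrightarrow>
     phi_t \<le> (LINT s:{mu + phi_d<..hi}|interval_measure G. s - (mu + phi_d))"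

text \<open>E_G[s | s \<le> tau] (meaningful when G tau > 0).\<close>
definition cond_exp_below :: "(real \<Rightarrow> real) \<Rightarrow> real \<Rightarrow> real" where
  "cond_exp_below G tau = (LINT s:{..tau}|interval_measure G. s) / G tau"

text \<open>(w-HE); the equation requires the conditional expectation to be defined, i.e. G tau > 0.\<close>
definition wHE :: "(real \<Rightarrow> real) \<Rightarrow> real \<Rightarrow> real \<Rightarrow> bool" where
  "wHE G phi_d tau \<longleftrightarrow> G tau > 0 \<and> tau - phi_d = cond_exp_below G tau
     \<and> (\<forall>tau'. tau' > tau \<longrightarrow> tau' - phi_d \<ge> cond_exp_below G tau')"

definition feasible :: "real \<Rightarrow> real \<Rightarrow> real \<Rightarrow> (real \<Rightarrow> real) \<Rightarrow> (real \<Rightarrow> real)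
    \<Rightarrow> real \<Rightarrow> real \<Rightarrow> real \<Rightarrow> bool" where
  "feasible lo hi mu F G phi_t phi_d tau \<longleftrightarrow>
     Gamma lo hi F G \<and> wP hi mu G phi_t phi_d \<and> wHE G phi_d tau"

definition robustly_optimal :: "real \<Rightarrow> real \<Rightarrow> real \<Rightarrow> (real \<Rightarrow> real) \<Rightarrow> (real \<Rightarrow> real)
    \<Rightarrow> real \<Rightarrow> real \<Rightarrow> bool" where
  "robustly_optimal lo hi mu F G phi_t phi_d \<longleftrightarrow>
     (\<exists>tau. feasible lo hi mu F G phi_t phi_d tau \<and>
        (\<forall>G' phi_t' phi_d' tau'. feasible lo hi mu F G' phi_t' phi_d' tau' \<longrightarrow>
            Rhat G' phi_t' phi_d' tau' \<le> Rhat G phi_t phi_d tau))"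

definition Gstar :: "real \<Rightarrow> real \<Rightarrow> real \<Rightarrow> real \<Rightarrow> real" where
  "Gstar lo hi mu s =
     (if s < lo then 0
      else if s < lo + hi - mu then exp ((lo - mu) / (hi - mu))
      else if s \<le> hi then exp ((s - hi) / (hi - mu))
      else 1)"

end

theory Submission
  imports Defs "HOL-Probability.Probability"
begin

(* Write H(x) for the integral of the score CDF G over [lo, x]. Integrating by parts, (w-HE) becomes
   H(tau) = phi_d G(tau) with phi_d G <= H to the right of tau, and (w-P) becomes
   phi_t <= H(mu + phi_d) - phi_d, so the revenue is at most H(mu + phi_d) - H(tau). As H' = G,
   the inequality phi_d H' <= H gives H(y) <= H(tau) exp((y - tau) / phi_d) (Gronwall). Together with
   H(hi) = hi - mu (unbiasedness) and the monotonicity of G this bounds the revenue by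
   d (1 - exp(-(mu - lo) / d)) with d = hi - mu, strictly unless phi_d = d, because
   1/x - 1/(e^x - 1) is strictly decreasing. G* attains the bound, and equality forces
   tau = lo + d and phi_t = 0 and determines H, hence G. *)

lemma nn_integral_interval_measure_excess:
  fixes G :: "real \<Rightarrow> real"
  assumes mono: "mono G" and rc: "\<And>x. continuous (at_right x) G" and ab: "a \<le> b"
  shows "(\<integral>\<^sup>+ s. ennreal (indicator {a<..b} s * (s - a)) \<partial>interval_measure G)
         = ennreal (integral {a..b} (\<lambda>t. G b - G t))"
proof -
  let ?M = "interval_measure G"
  have monoG: "\<And>x y. x \<le> y \<Longrightarrow> G x \<le> G y" using mono by (auto simp: mono_def)
  interpret M: sigma_finite_measure ?M
    by (rule sigma_finite_interval_measure[OF monoG rc])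
  interpret P: pair_sigma_finite ?M lborel ..
  (* Tonelli on the triangle a < t < s <= b *)
  define S where "S = {x. a < snd x \<and> snd x < fst x \<and> fst x \<le> (b::real)}"
  have "Measurable.pred (?M \<Otimes>\<^sub>M lborel) (\<lambda>x. a < snd x \<and> snd x < fst x \<and> fst x \<le> (b::real))"
    by measurable
  then have "S \<in> sets (?M \<Otimes>\<^sub>M lborel)"
    unfolding S_def pred_def by (simp add: space_pair_measure)
  then have meas: "(\<lambda>(s,t). indicator S (s,t) :: ennreal) \<in> borel_measurable (?M \<Otimes>\<^sub>M lborel)"
    by simp
  have inner_t: "(\<integral>\<^sup>+ t. indicator S (s,t) \<partial>lborel) = ennreal (indicator {a<..b} s * (s - a))" for s
  proof -
    have "(\<lambda>t. indicator S (s,t) :: ennreal) = indicator (if a < s \<and> s \<le> b then {a<..<s} else {})"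
      by (auto simp: S_def indicator_def fun_eq_iff)
    then show ?thesis by (simp add: indicator_def)
  qed
  have inner_s: "(\<integral>\<^sup>+ s. indicator S (s,t) \<partial>?M) = ennreal (indicator {a<..<b} t * (G b - G t))" for t
  proof -
    have "(\<lambda>s. indicator S (s,t) :: ennreal) = indicator (if a < t then {t<..b} else {})"
      by (auto simp: S_def indicator_def fun_eq_iff)
    then show ?thesis
      using emeasure_interval_measure_Ioc_eq[OF monoG rc, of t b] by (simp add: indicator_def)
  qed
  have "(\<integral>\<^sup>+ s. ennreal (indicator {a<..b} s * (s - a)) \<partial>?M)
      = (\<integral>\<^sup>+ s. (\<integral>\<^sup>+ t. indicator S (s,t) \<partial>lborel) \<partial>?M)"
    by (simp add: inner_t)
  also have "\<dots> = (\<integral>\<^sup>+ t. (\<integral>\<^sup>+ s. indicator S (s,t) \<partial>?M) \<partial>lborel)"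
    using P.Fubini'[of "\<lambda>s t. indicator S (s,t)"] meas by simp
  also have "\<dots> = (\<integral>\<^sup>+ t. ennreal (indicator {a<..<b} t * (G b - G t)) \<partial>lborel)"
    by (simp add: inner_s)
  also have "\<dots> = ennreal (integral {a..b} (\<lambda>t. G b - G t))"
  proof -
    have "(\<lambda>t. G b - G t) integrable_on {a..b}"
      using integrable_on_mono_on[of a b G] mono
      by (intro integrable_diff integrable_const_ivl) (auto simp: mono_on_def mono_def)
    then have "((\<lambda>t. G b - G t) has_integral integral {a..b} (\<lambda>t. G b - G t)) {a<..<b}"
      using has_integral_open_interval[of "\<lambda>t. G b - G t" _ a b] by (simp add: has_integral_integral)
    then have "integral\<^sup>N lborel (\<lambda>x. indicator {a<..<b} x * (G b - G x)) = integral {a..b} (\<lambda>t. G b - G t)"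
      by (intro nn_integral_has_integral_lebesgue) (auto simp: monoG)
    then show ?thesis by simp
  qed
  finally show ?thesis .
qed

lemma right_derivative_nonpos_imp_le_slope:
  fixes f :: "real \<Rightarrow> real"
  assumes ab: "a \<le> b" and cont: "continuous_on {a..b} f" and e: "0 < e"
    and der: "\<And>y. a \<le> y \<Longrightarrow> y < b \<Longrightarrow> \<exists>D. (f has_real_derivative D) (at y within {y..b}) \<and> D \<le> 0"
  shows "f b \<le> f a + e * (b - a)"
proof -
  (* the points where f lies below the line of slope e through (a, f a) reach up to b *)
  define S where "S = {a..b} \<inter> (\<lambda>y. f y - e * (y - a)) -` {..f a}"
  have "continuous_on {a..b} (\<lambda>y. f y - e * (y - a))"
    by (intro continuous_intros cont)
  then have "closed S" unfolding S_def
    by (rule continuous_closed_preimage) auto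
  moreover have "a \<in> S" "bdd_above S" using ab by (auto simp: S_def bdd_above_def)
  ultimately have sS: "Sup S \<in> S" using closed_contains_Sup by blast
  have "Sup S = b"
  proof (rule ccontr)
    let ?s = "Sup S"
    assume "?s \<noteq> b"
    with sS have s: "a \<le> ?s" "?s < b" by (auto simp: S_def)
    from der[OF s] obtain D where D: "(f has_real_derivative D) (at ?s within {?s..b})" "D \<le> 0"
      by blast
    have "((\<lambda>y. (f y - f ?s) / (y - ?s)) \<longlongrightarrow> D) (at ?s within {?s..b})"
      using D(1) by (simp add: has_field_derivative_iff)
    then have "\<forall>\<^sub>F y in at ?s within {?s..b}. (f y - f ?s) / (y - ?s) < D + e"
      using e by (intro order_tendstoD(2)) auto
    then obtain \<delta> where \<delta>: "\<delta> > 0"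
      "\<And>y. y \<in> {?s..b} \<Longrightarrow> y \<noteq> ?s \<Longrightarrow> dist y ?s < \<delta> \<Longrightarrow> (f y - f ?s) / (y - ?s) < D + e"
      unfolding eventually_at by blast
    define z where "z = min b (?s + \<delta>/2)"
    have z: "?s < z" "z \<le> b" "dist z ?s < \<delta>" using s \<delta>(1) by (auto simp: z_def dist_real_def)
    have "f z - f ?s < (D + e) * (z - ?s)"
      using \<delta>(2)[of z] z by (simp add: divide_less_eq)
    also have "\<dots> \<le> e * (z - ?s)" using D(2) z by (intro mult_right_mono) auto
    finally have "z \<in> S" using sS z s by (auto simp: S_def algebra_simps)
    then show False using z \<open>bdd_above S\<close> by (meson cSup_upper leD)
  qed
  then show ?thesis using sS by (auto simp: S_def)
qed

lemma right_derivative_nonpos_imp_le: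
  fixes f :: "real \<Rightarrow> real"
  assumes ab: "a \<le> b" and cont: "continuous_on {a..b} f"
    and der: "\<And>y. a \<le> y \<Longrightarrow> y < b \<Longrightarrow> \<exists>D. (f has_real_derivative D) (at y within {y..b}) \<and> D \<le> 0"
  shows "f b \<le> f a"
proof (rule field_le_epsilon)
  fix e :: real assume "0 < e"
  then have "0 < e / (b - a + 1)" using ab by simp
  from right_derivative_nonpos_imp_le_slope[OF ab cont this der]
  have "f b \<le> f a + e / (b - a + 1) * (b - a)" .
  also have "e / (b - a + 1) * (b - a) \<le> e"
    using ab \<open>0 < e\<close> by (simp add: field_simps)
  finally show "f b \<le> f a + e" by simp
qed

lemma continuous_at_right_eventually_eq:
  fixes f g :: "real \<Rightarrow> real"
  assumes "\<forall>\<^sub>F z in at_right x. g z = f z" "f x = g x" "continuous (at_right x) g"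
  shows "continuous (at_right x) f"
  using assms unfolding continuous_within by (auto intro: Lim_transform_eventually)

locale interval_cdf =
  fixes lo hi :: real and G :: "real \<Rightarrow> real"
  assumes cdf: "cdf_on lo hi G"
begin

lemma G_mono: "x \<le> y \<Longrightarrow> G x \<le> G y"
  using cdf by (auto simp: cdf_on_def mono_def)

lemma G_right_continuous: "continuous (at_right x) G"
  using cdf by (auto simp: cdf_on_def)

lemma G_below: "x < lo \<Longrightarrow> G x = 0"
  using cdf by (auto simp: cdf_on_def)

lemma G_above: "hi \<le> x \<Longrightarrow> G x = 1"
  using cdf by (auto simp: cdf_on_def)

lemma lo_le_hi: "lo \<le> hi"
  using G_below[of hi] G_above[of hi] by force

lemma G_nonneg: "0 \<le> G x"
  using G_mono[of "min x (lo - 1)" x] G_below[of "min x (lo - 1)"] by simp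

lemma G_tendsto_at_bot: "(G \<longlongrightarrow> 0) at_bot"
  by (rule tendsto_eventually) (auto simp: eventually_at_bot_dense intro: G_below)

lemma G_tendsto_at_top: "(G \<longlongrightarrow> 1) at_top"
  by (rule tendsto_eventually) (auto simp: eventually_at_top_linorder intro: G_above)

sublocale M: prob_space "interval_measure G"
  using real_distribution_interval_measure[OF G_mono G_right_continuous G_tendsto_at_bot G_tendsto_at_top]
  by (simp add: real_distribution_def)

lemma emeasure_Iic: "emeasure (interval_measure G) {..x} = G x"
  by (rule emeasure_interval_measure_Iic[OF G_mono G_right_continuous G_tendsto_at_bot])

lemma measure_Ioc: "x \<le> y \<Longrightarrow> measure (interval_measure G) {x<..y} = G y - G x"
  by (rule measure_interval_measure_Ioc[OF _ G_mono G_right_continuous])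

lemma AE_greater: "a < lo \<Longrightarrow> AE s in interval_measure G. a < s"
  by (rule AE_I'[of "{..a}"]) (auto simp: null_sets_def emeasure_Iic G_below)

lemma AE_le_hi: "AE s in interval_measure G. s \<le> hi"
proof (rule AE_I'[of "UNIV - {..hi}"])
  have "measure (interval_measure G) (UNIV - {..hi}) = 0"
    using M.prob_compl[of "{..hi}"] emeasure_Iic[of hi] G_above[of hi]
    by (simp add: M.emeasure_eq_measure)
  then show "UNIV - {..hi} \<in> null_sets (interval_measure G)"
    by (simp add: M.emeasure_eq_measure null_sets_def)
qed auto

lemma G_integrable_on: "G integrable_on {a..b}"
  using integrable_on_mono_on[of a b G] G_mono by (auto simp: mono_on_def)

lemma integral_G_split:
  "a \<le> c \<Longrightarrow> c \<le> b \<Longrightarrow> integral {a..b} G = integral {a..c} G + integral {c..b} G"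
  using Henstock_Kurzweil_Integration.integral_combine[OF _ _ G_integrable_on] by simp

lemma integral_G_lower: "x \<le> y \<Longrightarrow> (y - x) * G x \<le> integral {x..y} G"
  using integral_le[of "\<lambda>_. G x" "{x..y}" G] G_integrable_on G_mono by force

lemma integral_G_upper: "x \<le> y \<Longrightarrow> integral {x..y} G \<le> (y - x) * G y"
  using integral_le[of G "{x..y}" "\<lambda>_. G y"] G_integrable_on G_mono by force

lemma integral_G_nonneg: "0 \<le> integral {x..y} G"
  by (rule integral_nonneg) (auto intro: G_integrable_on G_nonneg)

lemma integral_G_mono: "x \<le> y \<Longrightarrow> lo \<le> x \<Longrightarrow> integral {lo..x} G \<le> integral {lo..y} G"
  using integral_G_split[of lo x y] integral_G_nonneg[of x y] by simp

lemma integral_G_beyond_hi: "hi \<le> x \<Longrightarrow> integral {lo..x} G = integral {lo..hi} G + (x - hi)"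
  using integral_G_split[of lo hi x] lo_le_hi integral_cong[of "{hi..x}" G "\<lambda>_. 1"] G_above
  by simp

lemma integral_G_below_lo: "a \<le> lo \<Longrightarrow> integral {a..lo} G = 0"
  using integral_spike[of "{lo}" "{a..lo}" "\<lambda>_. 0" G] G_below by auto

lemma integral_excess:
  assumes "a \<le> b"
  shows "integrable (interval_measure G) (\<lambda>s. indicator {a<..b} s * (s - a))"
    and "(LINT s|interval_measure G. indicator {a<..b} s * (s - a)) = integral {a..b} (\<lambda>t. G b - G t)"
proof -
  let ?f = "\<lambda>s. indicator {a<..b} s * (s - a) :: real"
  show int: "integrable (interval_measure G) ?f"
  proof (rule M.integrable_const_bound[where B="b - a"])
    show "AE x in interval_measure G. norm (?f x) \<le> b - a"
      using assms by (intro AE_I2) (auto simp: indicator_def)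
  qed simp
  have nn: "AE x in interval_measure G. 0 \<le> ?f x"
    by (intro AE_I2) (auto simp: indicator_def)
  have "0 \<le> integral {a..b} (\<lambda>t. G b - G t)"
    using assms G_integrable_on
    by (intro integral_nonneg) (auto intro!: integrable_diff integrable_const_ivl simp: G_mono)
  then show "(LINT s|interval_measure G. ?f s) = integral {a..b} (\<lambda>t. G b - G t)"
    using nn_integral_eq_integral[OF int nn, symmetric] integral_nonneg_AE[OF nn]
      nn_integral_interval_measure_excess[OF _ G_right_continuous assms] cdf
    by (simp add: cdf_on_def)
qed

lemma set_integral_Iic_id:
  assumes "lo \<le> t"
  shows "(LINT s:{..t}|interval_measure G. s) = t * G t - integral {lo..t} G"
proof -
  (* G puts no mass at or below a = lo - 1, which reduces the integral to integral_excess on {a<..t} *)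
  define a where "a = lo - 1"
  have a: "a < lo" "a \<le> t" using assms by (auto simp: a_def)
  have "(LINT s:{..t}|interval_measure G. s)
     = (LINT s|interval_measure G. indicator {a<..t} s * (s - a) + a * indicator {a<..t} s)"
    unfolding set_lebesgue_integral_def
    by (rule integral_cong_AE) (use AE_greater[OF a(1)] in \<open>auto elim!: AE_mp simp: indicator_def\<close>)
  also have "\<dots> = integral {a..t} (\<lambda>x. G t - G x) + a * G t"
  proof -
    have "integrable (interval_measure G) (\<lambda>s. a * indicator {a<..t} s)"
      by (intro integrable_mult_right integrable_real_indicator) (auto simp: M.emeasure_eq_measure)
    then show ?thesis
      using Bochner_Integration.integral_add[OF integral_excess(1)[OF a(2)]]
        integral_excess(2)[OF a(2)] measure_Ioc[OF a(2)] G_below[OF a(1)]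
      by (simp add: M.emeasure_eq_measure)
  qed
  also have "integral {a..t} (\<lambda>x. G t - G x) = (t - a) * G t - integral {a..t} G"
    using a by (subst integral_diff) (auto intro: G_integrable_on)
  also have "integral {a..t} G = integral {lo..t} G"
    using integral_G_split[of a lo t] integral_G_below_lo[of a] a assms by simp
  finally show ?thesis by (simp add: algebra_simps)
qed

lemma set_integral_excess_Ioc:
  assumes "lo \<le> c"
  shows "(LINT s:{c<..hi}|interval_measure G. s - c) = hi - c - integral {lo..hi} G + integral {lo..c} G"
proof (cases "c \<le> hi")
  case True
  have "(LINT s:{c<..hi}|interval_measure G. s - c) = integral {c..hi} (\<lambda>x. G hi - G x)"
    using integral_excess(2)[OF True] by (simp add: set_lebesgue_integral_def)
  also have "\<dots> = (hi - c) - integral {c..hi} G"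
    using True G_above[of hi] by (subst integral_diff) (auto intro: G_integrable_on)
  also have "integral {c..hi} G = integral {lo..hi} G - integral {lo..c} G"
    using integral_G_split[of lo c hi] assms True by simp
  finally show ?thesis by simp
next
  case False
  then have "{c<..hi} = {}" by auto
  then show ?thesis using integral_G_beyond_hi[of c] False by (simp add: set_lebesgue_integral_def)
qed

lemma integral_id: "(LINT s|interval_measure G. s) = hi - integral {lo..hi} G"
proof -
  have "(LINT s|interval_measure G. s) = (LINT s:{..hi}|interval_measure G. s)"
    unfolding set_lebesgue_integral_def
    by (rule integral_cong_AE) (use AE_le_hi in \<open>auto elim!: AE_mp simp: indicator_def\<close>)
  then show ?thesis using set_integral_Iic_id[OF lo_le_hi] G_above[of hi] by simp
qed

lemma cond_exp_below_eq:
  "lo \<le> t \<Longrightarrow> cond_exp_below G t = (t * G t - integral {lo..t} G) / G t"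
  unfolding cond_exp_below_def by (simp add: set_integral_Iic_id)

lemma wHE_iff:
  "wHE G phi tau \<longleftrightarrow> lo \<le> tau \<and> 0 < G tau \<and> integral {lo..tau} G = phi * G tau
     \<and> (\<forall>y > tau. phi * G y \<le> integral {lo..y} G)"
proof (cases "0 < G tau")
  case pos: True
  then have tau: "lo \<le> tau" using G_below[of tau] by (cases "tau < lo") auto
  have "(y - phi \<ge> cond_exp_below G y) \<longleftrightarrow> phi * G y \<le> integral {lo..y} G" if "tau < y" for y
  proof -
    have "0 < G y" using pos that G_mono[of tau y] by simp
    then show ?thesis using tau that by (simp add: cond_exp_below_eq field_simps)
  qed
  moreover have "(tau - phi = cond_exp_below G tau) \<longleftrightarrow> integral {lo..tau} G = phi * G tau"
    using tau pos by (auto simp: cond_exp_below_eq field_simps)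
  ultimately show ?thesis
    unfolding wHE_def using pos tau by auto
qed (auto simp: wHE_def)

lemma wP_iff:
  "lo \<le> mu + phi \<Longrightarrow> wP hi mu G t phi \<longleftrightarrow>
     t \<le> hi - (mu + phi) - integral {lo..hi} G + integral {lo..mu + phi} G"
  unfolding wP_def by (simp add: set_integral_excess_Ioc)

lemma integral_G_right_derivative:
  assumes "lo \<le> x" "x < y"
  shows "((\<lambda>u. integral {lo..u} G) has_real_derivative G x) (at x within {x..y})"
proof -
  have "continuous (at x within {x..y}) G"
    using G_right_continuous[of x] at_within_Icc_at_right[OF assms(2)] by (simp add: continuous_def)
  then have "((\<lambda>u. integral {x..u} G) has_real_derivative G x) (at x within {x..y})"
    using integral_has_vector_derivative_continuous_at[of G x y x "{}"] G_integrable_on assms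
    by (simp add: has_real_derivative_iff_has_vector_derivative)
  then have "((\<lambda>u. integral {lo..x} G + integral {x..u} G) has_real_derivative G x) (at x within {x..y})"
    using DERIV_add[OF DERIV_const] by fastforce
  then show ?thesis
  proof (rule has_field_derivative_transform_within[where d=1])
    fix u assume "u \<in> {x..y}"
    then show "integral {lo..x} G + integral {x..u} G = integral {lo..u} G"
      using integral_G_split[of lo x u] assms by simp
  qed (use assms in auto)
qed

lemma integral_G_continuous_on: "continuous_on {a..b} (\<lambda>u. integral {lo..u} G)"
  if "lo \<le> a"
  using indefinite_integral_continuous_1[OF G_integrable_on, of lo "max b lo"]
  by (rule continuous_on_subset) (use that in auto)

lemma integral_G_gronwall:
  assumes "lo \<le> x" "x \<le> y" "0 < phi"
    and le: "\<And>z. x \<le> z \<Longrightarrow> z \<le> y \<Longrightarrow> phi * G z \<le> integral {lo..z} G"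
  shows "integral {lo..y} G \<le> integral {lo..x} G * exp ((y - x) / phi)"
proof -
  define f where "f u = integral {lo..u} G * exp (- (u - x) / phi)" for u
  have "f y \<le> f x"
  proof (rule right_derivative_nonpos_imp_le[OF assms(2)])
    show "continuous_on {x..y} f"
      unfolding f_def using assms(1,3) by (intro continuous_intros integral_G_continuous_on) auto
    fix z assume z: "x \<le> z" "z < y"
    let ?E = "exp (- (z - x) / phi)"
    have "((\<lambda>u. exp (- (u - x) / phi)) has_real_derivative (?E * (- 1 / phi))) (at z within {z..y})"
      using assms(3) by (auto intro!: derivative_eq_intros simp: divide_simps)
    then have "(f has_real_derivative (G z * ?E + (?E * (- 1 / phi)) * integral {lo..z} G)) (at z within {z..y})"
      unfolding f_def using integral_G_right_derivative[of z y] assms(1) z by (intro DERIV_mult) auto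
    moreover have "G z * ?E + (?E * (- 1 / phi)) * integral {lo..z} G \<le> 0"
    proof -
      have "G z - integral {lo..z} G / phi \<le> 0"
        using le[of z] z assms(3) by (simp add: field_simps)
      then have "?E * (G z - integral {lo..z} G / phi) \<le> 0" by (simp add: mult_nonneg_nonpos)
      then show ?thesis by (simp add: algebra_simps)
    qed
    ultimately show "\<exists>D. (f has_real_derivative D) (at z within {z..y}) \<and> D \<le> 0" by blast
  qed
  then have "integral {lo..y} G * exp (- (y - x) / phi) \<le> integral {lo..x} G"
    by (simp add: f_def)
  then have "integral {lo..y} G * exp (- (y - x) / phi) * exp ((y - x) / phi)
      \<le> integral {lo..x} G * exp ((y - x) / phi)"
    by (rule mult_right_mono) simp
  then show ?thesis by (simp add: mult.assoc add_divide_distrib[symmetric] flip: exp_add)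
qed

lemma increment_budget:
  assumes "lo \<le> tau" "tau \<le> c" "c \<le> hi" "c - tau \<le> A"
  shows "A * integral {lo..c} G + (hi - c) * (integral {lo..c} G - integral {lo..tau} G)
    \<le> A * integral {lo..hi} G"
proof -
  have "integral {lo..c} G - integral {lo..tau} G = integral {tau..c} G"
    using integral_G_split[of lo tau c] assms by simp
  also have "\<dots> \<le> A * G c"
    using integral_G_upper[of tau c] G_nonneg[of c] assms by (smt (verit) mult_right_mono)
  finally have "(hi - c) * (integral {lo..c} G - integral {lo..tau} G) \<le> A * ((hi - c) * G c)"
    using assms(3) by (smt (verit) mult_left_mono mult.left_commute)
  also have "(hi - c) * G c \<le> integral {lo..hi} G - integral {lo..c} G"
    using integral_G_lower[OF assms(3)] integral_G_split[of lo c hi] assms by simp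
  finally show ?thesis
    using assms by (smt (verit) mult_left_mono right_diff_distrib)
qed

lemma eq_if_integrals_eq:
  assumes "cdf_on lo hi G'"
    and eq: "\<And>x. lo \<le> x \<Longrightarrow> x \<le> hi \<Longrightarrow> integral {lo..x} G = integral {lo..x} G'"
  shows "G = G'"
proof
  interpret G': interval_cdf lo hi G' by (rule interval_cdf.intro[OF assms(1)])
  fix x
  consider "x < lo" | "hi \<le> x" | "lo \<le> x" "x < hi" by linarith
  then show "G x = G' x"
  proof cases
    case 3
    have "((\<lambda>u. integral {lo..u} G) has_real_derivative G' x) (at x within {x..hi})"
      using G'.integral_G_right_derivative[OF 3]
      by (rule has_field_derivative_transform_within[where d=1]) (use 3 eq in auto)
    moreover have "at x within {x..hi} \<noteq> bot"
      using at_within_Icc_at_right[OF 3(2)] trivial_limit_at_right_real by simp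
    ultimately show ?thesis
      using has_field_derivative_unique integral_G_right_derivative[OF 3] by blast
  qed (simp_all add: G_below G'.G_below G_above G'.G_above)
qed

end

lemma less_sinh_real: "0 < x \<Longrightarrow> x < sinh (x :: real)"
  using DERIV_pos_imp_increasing_open[of 0 x "\<lambda>z. sinh z - z"]
  by (fastforce intro!: derivative_eq_intros continuous_intros
      simp: cosh_real_ge_1 order_le_neq_trans)

lemma sq_times_exp_less_sq_exp_minus_one:
  fixes x :: real
  assumes "0 < x"
  shows "x\<^sup>2 * exp x < (exp x - 1)\<^sup>2"
proof -
  define y where "y = x / 2"
  have "exp x - 1 = exp y * (2 * sinh y)"
    by (simp add: y_def sinh_field_def algebra_simps flip: exp_add)
  then have "(exp x - 1)\<^sup>2 = (exp y)\<^sup>2 * (2 * sinh y)\<^sup>2"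
    by (simp add: power_mult_distrib)
  also have "(exp y)\<^sup>2 = exp x"
    by (simp add: y_def power2_eq_square flip: exp_add)
  finally have "(exp x - 1)\<^sup>2 = exp x * (2 * sinh y)\<^sup>2" .
  moreover have "x\<^sup>2 < (2 * sinh y)\<^sup>2"
    using less_sinh_real[of y] assms by (intro power_strict_mono) (auto simp: y_def)
  ultimately show ?thesis by simp
qed

lemma inverse_minus_inverse_exp_minus_one_strict_antimono:
  fixes u v :: real
  assumes "0 < v" "v < u"
  shows "1 / u - 1 / (exp u - 1) < 1 / v - 1 / (exp v - 1)"
proof (rule DERIV_neg_imp_decreasing[OF assms(2)])
  fix x assume "v \<le> x" "x \<le> u"
  then have x: "0 < x" using assms by simp
  have "exp x / (exp x - 1)\<^sup>2 < 1 / x\<^sup>2"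
    using sq_times_exp_less_sq_exp_minus_one[OF x] x by (simp add: divide_simps mult.commute)
  then show "\<exists>y. ((\<lambda>x. 1 / x - 1 / (exp x - 1)) has_real_derivative y) (at x) \<and> y < 0"
    using x by (auto intro!: derivative_eq_intros exI simp: power2_eq_square field_simps)
qed

lemma inverse_exp_minus_one_less:
  fixes A d phi :: real
  assumes "0 < A" "0 < phi" "phi < d"
  shows "1 / (exp (A / d) - 1) < 1 / (exp (A / phi) - 1) + (d - phi) / A"
proof -
  have "A / d < A / phi" using assms by (simp add: frac_less2)
  from inverse_minus_inverse_exp_minus_one_strict_antimono[OF _ this]
  have "phi / A - 1 / (exp (A / phi) - 1) < d / A - 1 / (exp (A / d) - 1)"
    using assms by simp
  then show ?thesis by (simp add: diff_divide_distrib)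
qed

lemma increment_linear_bound:
  fixes A d phi e X D :: real
  assumes A: "0 < A" and phi: "0 < phi" and e: "e \<le> exp (A / phi)"
    and X: "0 \<le> X" and D: "D \<le> X * (e - 1)"
    and budget: "A * (X + D) + (d - phi) * D \<le> A * d"
  shows "D * (1 + 1 / (exp (A / phi) - 1) + (d - phi) / A) \<le> d"
proof -
  define E where "E = exp (A / phi)"
  have E: "1 < E" using A phi by (simp add: E_def)
  have "D \<le> X * (E - 1)"
    using D e X by (smt (verit, best) E_def mult_left_mono)
  then have "D / (E - 1) \<le> X"
    using E by (simp add: divide_le_eq mult.commute)
  then have "A * (D / (E - 1) + D) + (d - phi) * D \<le> A * d"
    using budget A by (smt (verit) mult_left_mono)
  then show ?thesis
    using A E by (simp add: E_def[symmetric] field_simps)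
qed

(* In the application X = H(tau), D = H(mu + phi) - H(tau) and e = exp((mu + phi - tau) / phi) is the
   Gronwall factor, so that D bounds the revenue. *)
lemma increment_bound:
  fixes A d phi e X D :: real
  assumes A: "0 < A" and phi: "0 < phi" "phi \<le> d" and e: "1 \<le> e" "e \<le> exp (A / phi)"
    and X: "0 \<le> X" and D: "0 \<le> D" "D \<le> X * (e - 1)"
    and budget: "A * (X + D) + (d - phi) * D \<le> A * d"
  shows "D \<le> d * (1 - exp (- A / d))"
    and "d * (1 - exp (- A / d)) \<le> D \<Longrightarrow> phi = d \<and> X = d * exp (- A / d) \<and> e = exp (A / d)"
proof -
  define Ed where "Ed = exp (A / d)"
  define Kd where "Kd = 1 + 1 / (Ed - 1)"
  define K where "K = 1 + 1 / (exp (A / phi) - 1) + (d - phi) / A"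
  have d: "0 < d" and Ed: "1 < Ed" and Kd: "0 < Kd"
    using A phi by (simp_all add: Ed_def Kd_def add_pos_pos)
  have a: "exp (- A / d) = 1 / Ed" by (simp add: Ed_def exp_minus inverse_eq_divide)
  have opt: "d * (1 - exp (- A / d)) = d / Kd"
    unfolding a Kd_def using Ed by (simp add: field_simps)
  have DK: "D * K \<le> d"
    unfolding K_def by (rule increment_linear_bound[OF A phi(1) e(2) X D(2) budget])
  have strict: "Kd < K" if "phi < d"
    using inverse_exp_minus_one_less[OF A phi(1) that] by (simp add: K_def Kd_def Ed_def)
  then have "Kd \<le> K"
    using phi by (cases "phi = d") (auto simp: K_def Kd_def Ed_def)
  then have DKd: "D * Kd \<le> d"
    using DK D(1) by (smt (verit) mult_left_mono)
  then show "D \<le> d * (1 - exp (- A / d))"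
    unfolding opt using Kd by (simp add: le_divide_eq)
  assume "d * (1 - exp (- A / d)) \<le> D"
  then have DKd': "d \<le> D * Kd" unfolding opt using Kd by (simp add: divide_le_eq)
  have phid: "phi = d"
  proof (rule ccontr)
    assume "phi \<noteq> d"
    have "0 < D * Kd" using DKd' d by linarith
    then have "0 < D" using Kd by (simp add: zero_less_mult_iff)
    with \<open>phi \<noteq> d\<close> have "D * Kd < D * K"
      using strict phi by (intro mult_strict_left_mono) auto
    then show False using DK DKd' by simp
  qed
  have Deq: "D = d * (Ed - 1) / Ed"
    using DKd DKd' Ed by (simp add: Kd_def field_simps)
  have "X \<le> d / Ed"
    using budget A phid Deq Ed by (simp add: field_simps)
  then have "D \<le> d / Ed * (e - 1)"
    using D(2) e(1) by (smt (verit) mult_right_mono)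
  then have "Ed \<le> e" using Deq d Ed by (simp add: field_simps)
  then have eEd: "e = Ed" using e(2) phid by (simp add: Ed_def)
  then have "d / Ed * (Ed - 1) \<le> X * (Ed - 1)"
    using D(2) Deq by simp
  then have "d / Ed \<le> X"
    using Ed by (metis diff_gt_0_iff_gt mult_right_le_imp_le)
  then show "phi = d \<and> X = d * exp (- A / d) \<and> e = exp (A / d)"
    unfolding a using \<open>X \<le> d / Ed\<close> phid eEd by (simp add: Ed_def)
qed

locale two_point_prior =
  fixes lo hi p mu :: real and F :: "real \<Rightarrow> real"
  assumes lo_less_hi: "lo < hi" and p_pos: "0 < p" and p_less_1: "p < 1"
    and F_eq: "F = (\<lambda>x. if x < lo then 0 else if x < hi then p else 1)"
    and mu_mean: "mu = cdf_mean F"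
begin

lemma F_cdf: "cdf_on lo hi F"
  unfolding cdf_on_def
proof (intro conjI allI impI)
  show "mono F" unfolding F_eq mono_def using p_pos p_less_1 by auto
  fix x
  define b where "b = (if x < lo then lo else if x < hi then hi else x + 1)"
  have "x < b" "\<forall>z. x < z \<and> z < b \<longrightarrow> F x = F z"
    using lo_less_hi by (auto simp: b_def F_eq)
  then have "\<forall>\<^sub>F z in at_right x. F x = F z"
    by (auto simp: eventually_at_right_field)
  then show "continuous (at_right x) F"
    by (rule continuous_at_right_eventually_eq) simp_all
qed (use lo_less_hi in \<open>auto simp: F_eq\<close>)

sublocale F: interval_cdf lo hi F
  by (rule interval_cdf.intro[OF F_cdf])

lemma integral_F: "lo \<le> x \<Longrightarrow> x \<le> hi \<Longrightarrow> integral {lo..x} F = p * (x - lo)"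
  using integral_spike[of "{hi}" "{lo..x}" "\<lambda>_. p" F] by (auto simp: F_eq)

lemma mu_eq: "mu = hi - p * (hi - lo)"
  using F.integral_id integral_F[of hi] lo_less_hi by (simp add: mu_mean cdf_mean_def)

(* d is the optimal disclosure fee, a = G*(lo), and d * (1 - a) is the optimal revenue. *)
definition d where "d = hi - mu"
definition A where "A = mu - lo"
definition a where "a = exp (- A / d)"

lemma d_eq: "d = p * (hi - lo)" and A_eq: "A = (1 - p) * (hi - lo)"
  using mu_eq by (auto simp: d_def A_def algebra_simps)

lemma d_pos: "0 < d" and A_pos: "0 < A"
  using d_eq A_eq p_pos p_less_1 lo_less_hi by auto

lemma a_pos: "0 < a" by (simp add: a_def)

lemma a_less_1: "a < 1" using d_pos A_pos by (simp add: a_def)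

lemma a_less_p: "a < p"
proof -
  have "A / d = (1 - p) / p" using lo_less_hi by (simp add: d_eq A_eq)
  then have a: "a = inverse (exp ((1 - p) / p))" by (simp add: a_def exp_minus)
  have "1 / p < exp ((1 - p) / p)"
  proof -
    have "0 < (1 - p) / p" using p_pos p_less_1 by simp
    then have "1 + (1 - p) / p < exp ((1 - p) / p)"
      using exp_lower_Taylor_quadratic[of "(1 - p) / p"] by (smt (verit) zero_less_power divide_pos_pos)
    then show ?thesis using p_pos by (simp add: field_simps)
  qed
  then show ?thesis
    using p_pos by (simp add: a field_simps)
qed

lemma integral_F_hi: "integral {lo..hi} F = d"
  using integral_F[of hi] lo_less_hi d_eq by simp

lemma lo_plus_d: "lo + d = hi - A"
  by (simp add: A_def d_def)

lemma Gstar_cases: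
  "Gstar lo hi mu s =
     (if s < lo then 0 else if s < lo + d then a else if s \<le> hi then exp ((s - hi) / d) else 1)"
  by (simp add: Gstar_def a_def A_def d_def minus_diff_eq)

lemma a_eq_exp: "a = exp ((lo + d - hi) / d)"
  by (simp add: a_def lo_plus_d)

lemma exp_le_a_iff: "exp ((s - hi) / d) \<le> a \<longleftrightarrow> s \<le> lo + d"
  using d_pos by (simp add: a_eq_exp divide_le_cancel)

lemma exp_le_1_iff: "exp ((s - hi) / d) \<le> 1 \<longleftrightarrow> s \<le> hi"
  using d_pos by (simp add: divide_le_0_iff)

lemma lo_plus_d_le_hi: "lo + d \<le> hi"
  using lo_plus_d A_pos by simp

lemma Gstar_flat: "lo \<le> s \<Longrightarrow> s \<le> lo + d \<Longrightarrow> Gstar lo hi mu s = a"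
  using lo_plus_d_le_hi by (auto simp: Gstar_cases a_eq_exp)

lemma Gstar_exp: "lo + d \<le> s \<Longrightarrow> s \<le> hi \<Longrightarrow> Gstar lo hi mu s = exp ((s - hi) / d)"
  using d_pos by (auto simp: Gstar_cases a_eq_exp)

lemma Gstar_min_max: "lo \<le> s \<Longrightarrow> Gstar lo hi mu s = min 1 (max a (exp ((s - hi) / d)))"
  using exp_le_a_iff[of s] exp_le_1_iff[of s] a_less_1 lo_plus_d_le_hi a_eq_exp
  by (auto simp: Gstar_cases min_def max_def)

lemma Gstar_cdf: "cdf_on lo hi (Gstar lo hi mu)"
  unfolding cdf_on_def
proof (intro conjI allI impI)
  show "mono (Gstar lo hi mu)"
  proof
    fix x y :: real assume "x \<le> y"
    show "Gstar lo hi mu x \<le> Gstar lo hi mu y"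
    proof (cases "x < lo")
      case False
      have "min 1 (max a (exp ((x - hi) / d))) \<le> min 1 (max a (exp ((y - hi) / d)))"
        using \<open>x \<le> y\<close> d_pos by (intro min.mono max.mono) (auto simp: divide_right_mono)
      then show ?thesis using False \<open>x \<le> y\<close> by (simp add: Gstar_min_max)
    qed (use a_pos in \<open>simp add: Gstar_cases\<close>)
  qed
  fix x
  show "continuous (at_right x) (Gstar lo hi mu)"
  proof (cases "x < lo")
    case True
    then have "\<forall>\<^sub>F z in at_right x. 0 = Gstar lo hi mu z"
      by (auto simp: eventually_at_right_field Gstar_cases intro!: exI[of _ lo])
    then show ?thesis
      by (rule continuous_at_right_eventually_eq) (use True in \<open>simp_all add: Gstar_cases\<close>)
  next
    case False
    then have "\<forall>\<^sub>F z in at_right x. min 1 (max a (exp ((z - hi) / d))) = Gstar lo hi mu z"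
      by (auto simp: eventually_at_right_field Gstar_min_max intro!: exI[of _ "x + 1"])
    then show ?thesis
      by (rule continuous_at_right_eventually_eq)
        (use False d_pos in \<open>auto simp: Gstar_min_max intro!: continuous_intros\<close>)
  qed
qed (use lo_less_hi lo_plus_d_le_hi in \<open>auto simp: Gstar_cases\<close>)

sublocale Gstar: interval_cdf lo hi "Gstar lo hi mu"
  by (rule interval_cdf.intro[OF Gstar_cdf])

lemma integral_Gstar_flat:
  "lo \<le> x \<Longrightarrow> x \<le> lo + d \<Longrightarrow> integral {lo..x} (Gstar lo hi mu) = a * (x - lo)"
  using integral_cong[of "{lo..x}" "Gstar lo hi mu" "\<lambda>_. a"] Gstar_flat by simp

lemma integral_Gstar_exp:
  assumes "lo + d \<le> x" "x \<le> hi"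
  shows "integral {lo..x} (Gstar lo hi mu) = d * exp ((x - hi) / d)"
proof -
  have "((\<lambda>s. exp ((s - hi) / d)) has_integral d * exp ((x - hi) / d) - d * a) {lo + d..x}"
  proof -
    have "((\<lambda>s. d * exp ((s - hi) / d)) has_vector_derivative exp ((s - hi) / d)) (at s within {lo + d..x})"
      for s
      unfolding has_real_derivative_iff_has_vector_derivative[symmetric]
      by (rule derivative_eq_intros refl | use d_pos in simp)+
    then show ?thesis
      using fundamental_theorem_of_calculus[OF assms(1), of "\<lambda>s. d * exp ((s - hi) / d)"]
      by (simp add: a_eq_exp)
  qed
  then have "integral {lo + d..x} (Gstar lo hi mu) = d * exp ((x - hi) / d) - d * a"
    using integral_cong[of "{lo + d..x}" "Gstar lo hi mu"] Gstar_exp assms by (simp add: integral_unique)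
  moreover have "integral {lo..x} (Gstar lo hi mu)
      = integral {lo..lo + d} (Gstar lo hi mu) + integral {lo + d..x} (Gstar lo hi mu)"
    using Gstar.integral_G_split[of lo "lo + d" x] assms d_pos by simp
  ultimately show ?thesis
    using integral_Gstar_flat[of "lo + d"] d_pos by (simp add: algebra_simps)
qed

lemma integral_Gstar_hi: "integral {lo..hi} (Gstar lo hi mu) = d"
  using integral_Gstar_exp[of hi] lo_plus_d_le_hi by simp

lemma d_exp_le_p_mult:
  assumes "lo + d \<le> x" "x \<le> hi"
  shows "d * exp ((x - hi) / d) \<le> p * (x - lo)"
proof -
  define t where "t = (hi - x) / A"
  have t: "0 \<le> t" "t \<le> 1" using assms A_pos lo_plus_d by (auto simp: t_def field_simps)
  have "(x - hi) / d = (1 - t) *\<^sub>R 0 + t *\<^sub>R (- A / d)"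
    using A_pos d_pos by (simp add: t_def field_simps)
  then have "exp ((x - hi) / d) \<le> (1 - t) * exp 0 + t * exp (- A / d)"
    using convex_onD[OF exp_convex, of t 0 "- A / d"] t by simp
  also have "\<dots> \<le> 1 - t + t * p" using t a_less_p by (simp add: a_def mult_left_mono)
  finally have "d * exp ((x - hi) / d) \<le> d * (1 - t + t * p)" using d_pos by simp
  also have "d * (1 - t + t * p) = p * (x - lo)"
  proof -
    have "t * d * (1 - p) = p * (hi - x)"
      using A_pos lo_less_hi unfolding t_def A_eq d_eq by (simp add: field_simps)
    then show ?thesis by (simp add: d_eq algebra_simps)
  qed
  finally show ?thesis .
qed

lemma Gstar_Gamma: "Gamma lo hi F (Gstar lo hi mu)"
  unfolding Gamma_def
proof (intro conjI allI)
  show "integral {lo..hi} (Gstar lo hi mu) = integral {lo..hi} F"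
    using integral_Gstar_hi integral_F_hi by simp
  fix x
  consider "x < lo" | "lo \<le> x" "x \<le> lo + d" | "lo + d \<le> x" "x \<le> hi" | "hi \<le> x" by linarith
  then show "integral {lo..x} (Gstar lo hi mu) \<le> integral {lo..x} F"
  proof cases
    case 2
    then show ?thesis
      using integral_Gstar_flat integral_F[of x] lo_plus_d_le_hi a_less_p by (simp add: mult_right_mono)
  next
    case 3
    then show ?thesis using integral_Gstar_exp integral_F[of x] d_exp_le_p_mult d_pos by simp
  next
    case 4
    then show ?thesis
      using Gstar.integral_G_beyond_hi F.integral_G_beyond_hi integral_Gstar_hi integral_F_hi by simp
  qed simp
qed (rule Gstar_cdf)

lemma Gstar_wP: "wP hi mu (Gstar lo hi mu) 0 d"
  by (simp add: wP_def d_def set_lebesgue_integral_def)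

lemma Gstar_wHE: "wHE (Gstar lo hi mu) d (lo + d)"
  unfolding Gstar.wHE_iff
proof (intro conjI allI impI)
  show "0 < Gstar lo hi mu (lo + d)" "integral {lo..lo + d} (Gstar lo hi mu) = d * Gstar lo hi mu (lo + d)"
    using Gstar_flat[of "lo + d"] integral_Gstar_flat[of "lo + d"] d_pos a_pos by simp_all
  fix y assume "lo + d < y"
  then show "d * Gstar lo hi mu y \<le> integral {lo..y} (Gstar lo hi mu)"
    using Gstar_exp[of y] integral_Gstar_exp[of y] Gstar.integral_G_beyond_hi[of y] Gstar.G_above[of y]
      integral_Gstar_hi
    by (cases "y \<le> hi") simp_all
qed (use d_pos in simp)

lemma Gstar_feasible: "feasible lo hi mu F (Gstar lo hi mu) 0 d (lo + d)"
  unfolding feasible_def using Gstar_Gamma Gstar_wP Gstar_wHE by simp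

lemma Rhat_Gstar: "Rhat (Gstar lo hi mu) 0 d (lo + d) = d * (1 - a)"
  using Gstar_flat[of "lo + d"] d_pos by (simp add: Rhat_def)

lemma feasible_interval_cdf: "feasible lo hi mu F G t phi tau \<Longrightarrow> interval_cdf lo hi G"
  by (simp add: feasible_def Gamma_def interval_cdf_def)

lemma feasible_integral_hi: "feasible lo hi mu F G t phi tau \<Longrightarrow> integral {lo..hi} G = d"
  using integral_F_hi by (simp add: feasible_def Gamma_def)

lemma feasible_eq_Gstar:
  assumes feas: "feasible lo hi mu F G t d (lo + d)" and kink: "G (lo + d) = a"
  shows "G = Gstar lo hi mu"
proof -
  have wHE: "wHE G d (lo + d)" using feas by (simp add: feasible_def)
  interpret G: interval_cdf lo hi G using feasible_interval_cdf[OF feas] .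
  have hi: "integral {lo..hi} G = d" using feasible_integral_hi[OF feas] .
  have H_kink: "integral {lo..lo + d} G = d * a"
    and above: "\<And>y. lo + d < y \<Longrightarrow> d * G y \<le> integral {lo..y} G"
    using wHE kink by (auto simp: G.wHE_iff)
  have below_integral: "d * G y \<le> integral {lo..y} G" if "lo + d \<le> y" for y
    using above[of y] H_kink kink that by (cases "y = lo + d") auto
  show ?thesis
  proof (rule G.eq_if_integrals_eq[OF Gstar_cdf])
    fix x assume x: "lo \<le> x" "x \<le> hi"
    show "integral {lo..x} G = integral {lo..x} (Gstar lo hi mu)"
    proof (cases "x \<le> lo + d")
      case True
      have "integral {lo..x} G \<le> (x - lo) * a"
        using G.integral_G_upper[OF x(1)] G.G_mono[OF True] kink x(1) by (smt (verit) mult_left_mono)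
      moreover have "integral {x..lo + d} G \<le> (lo + d - x) * a"
        using G.integral_G_upper[OF True] kink by simp
      moreover have "integral {lo..lo + d} G = integral {lo..x} G + integral {x..lo + d} G"
        using G.integral_G_split[OF x(1) True] .
      ultimately show ?thesis
        using integral_Gstar_flat[OF x(1) True] H_kink by (simp add: algebra_simps)
    next
      case False
      have "integral {lo..x} G \<le> integral {lo..lo + d} G * exp ((x - (lo + d)) / d)"
        using G.integral_G_gronwall[of "lo + d" x d] below_integral False x d_pos by simp
      also have "\<dots> = d * exp ((x - hi) / d)"
        using H_kink by (simp add: a_eq_exp mult.assoc add_divide_distrib[symmetric] flip: exp_add)
      finally have "integral {lo..x} G \<le> d * exp ((x - hi) / d)" .
      moreover have "d \<le> integral {lo..x} G * exp ((hi - x) / d)"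
        using G.integral_G_gronwall[of x hi d] below_integral False x d_pos hi by simp
      then have "d * exp ((x - hi) / d) \<le> integral {lo..x} G * exp ((hi - x) / d) * exp ((x - hi) / d)"
        by (rule mult_right_mono) simp
      then have "d * exp ((x - hi) / d) \<le> integral {lo..x} G"
        by (simp add: mult.assoc add_divide_distrib[symmetric] flip: exp_add)
      ultimately show ?thesis
        using integral_Gstar_exp[of x] False x by simp
    qed
  qed
qed

lemma p_A_less_optimum: "p * A < d * (1 - a)"
proof -
  have "d * (1 - a) - p * A = p * (hi - lo) * (p - a)"
    unfolding d_eq A_eq by (simp add: algebra_simps)
  moreover have "0 < p * (hi - lo) * (p - a)" using p_pos lo_less_hi a_less_p by simp
  ultimately show ?thesis by linarith
qed

lemma Rhat_le_increment:
  assumes feas: "feasible lo hi mu F G t phi tau"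
  shows "0 \<le> phi" and "Rhat G t phi tau \<le> integral {lo..mu + phi} G - integral {lo..tau} G"
proof -
  have wP: "wP hi mu G t phi" and wHE: "wHE G phi tau"
    using feas by (auto simp: feasible_def)
  interpret G: interval_cdf lo hi G using feasible_interval_cdf[OF feas] .
  have hi: "integral {lo..hi} G = d" using feasible_integral_hi[OF feas] .
  have "0 < G tau" and tau: "integral {lo..tau} G = phi * G tau"
    using wHE by (auto simp: G.wHE_iff)
  then show "0 \<le> phi" using G.integral_G_nonneg[of lo tau] by (simp add: zero_le_mult_iff)
  then have "lo \<le> mu + phi" using A_pos by (simp add: A_def)
  then have "t \<le> integral {lo..mu + phi} G - phi"
    using wP hi by (simp add: G.wP_iff d_def)
  then show "Rhat G t phi tau \<le> integral {lo..mu + phi} G - integral {lo..tau} G"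
    using tau by (simp add: Rhat_def algebra_simps)
qed

lemma Rhat_less_optimum_degenerate:
  assumes feas: "feasible lo hi mu F G t phi tau" and deg: "hi \<le> tau \<or> phi = 0 \<or> mu + phi < tau"
  shows "Rhat G t phi tau < d * (1 - a)"
proof -
  have Gam: "Gamma lo hi F G" and wHE: "wHE G phi tau"
    using feas by (auto simp: feasible_def)
  interpret G: interval_cdf lo hi G using feasible_interval_cdf[OF feas] .
  have hi: "integral {lo..hi} G = d" using feasible_integral_hi[OF feas] .
  have tau: "lo \<le> tau" "integral {lo..tau} G = phi * G tau"
    using wHE by (auto simp: G.wHE_iff)
  have R: "Rhat G t phi tau \<le> integral {lo..mu + phi} G - integral {lo..tau} G"
    and "0 \<le> phi" using Rhat_le_increment[OF feas] by auto
  then have c: "lo \<le> mu + phi" using A_pos by (simp add: A_def)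
  have pA: "0 < p * A" using p_pos A_pos by simp
  have "Rhat G t phi tau \<le> p * A" using deg
  proof (elim disjE)
    assume "hi \<le> tau"
    then have "phi = d + (tau - hi)"
      using tau G.G_above G.integral_G_beyond_hi hi by simp
    then have "mu + phi = tau" by (simp add: d_def)
    then show ?thesis using R pA by simp
  next
    assume "phi = 0"
    then have "Rhat G t phi tau \<le> integral {lo..mu} G"
      using R G.integral_G_nonneg[of lo tau] by simp
    also have "\<dots> \<le> integral {lo..mu} F" using Gam by (simp add: Gamma_def)
    also have "\<dots> = p * A"
      using integral_F[of mu] A_pos d_pos by (simp add: A_def d_def)
    finally show ?thesis .
  next
    assume "mu + phi < tau"
    then show ?thesis using R G.integral_G_mono[of "mu + phi" tau] c pA by simp
  qed
  then show ?thesis using p_A_less_optimum by simp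
qed

lemma Rhat_le_optimum_regular:
  assumes feas: "feasible lo hi mu F G t phi tau"
    and phi: "0 < phi" and tau_hi: "tau < hi" and tau_c: "tau \<le> mu + phi"
  shows "Rhat G t phi tau \<le> d * (1 - a)"
    and "d * (1 - a) \<le> Rhat G t phi tau \<Longrightarrow> phi = d \<and> tau = lo + d \<and> G tau = a"
proof -
  have wHE: "wHE G phi tau" using feas by (simp add: feasible_def)
  interpret G: interval_cdf lo hi G using feasible_interval_cdf[OF feas] .
  have hi: "integral {lo..hi} G = d" using feasible_integral_hi[OF feas] .
  have tau: "lo \<le> tau" "0 < G tau" "integral {lo..tau} G = phi * G tau"
    and above: "\<And>y. tau < y \<Longrightarrow> phi * G y \<le> integral {lo..y} G"
    using wHE by (auto simp: G.wHE_iff)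
  define c where "c = mu + phi"
  define X where "X = integral {lo..tau} G"
  define D where "D = integral {lo..c} G - X"
  define e where "e = exp ((c - tau) / phi)"
  have R: "Rhat G t phi tau \<le> D"
    using Rhat_le_increment[OF feas] by (simp add: D_def X_def c_def)
  have "phi \<le> d" using above[OF tau_hi] G.G_above[of hi] hi by simp
  have "phi * G tau \<le> (tau - lo) * G tau" using G.integral_G_upper[OF tau(1)] tau(3) by simp
  then have "c - tau \<le> A" using tau(2) by (simp add: c_def A_def)
  have "c \<le> hi" using \<open>phi \<le> d\<close> by (simp add: c_def d_def)
  have e: "1 \<le> e" "e \<le> exp (A / phi)"
    using tau_c phi \<open>c - tau \<le> A\<close> by (simp_all add: e_def c_def divide_right_mono)
  have "integral {lo..c} G \<le> X * e"
    unfolding X_def e_def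
    by (rule G.integral_G_gronwall[OF tau(1) _ phi]) (use tau_c above tau(3) in \<open>auto simp: c_def le_less\<close>)
  then have D_le: "D \<le> X * (e - 1)" by (simp add: D_def algebra_simps)
  have "d - phi = hi - c" by (simp add: c_def d_def)
  then have budget: "A * (X + D) + (d - phi) * D \<le> A * d"
    using G.increment_budget[OF tau(1) _ \<open>c \<le> hi\<close> \<open>c - tau \<le> A\<close>] tau_c hi
    by (simp add: D_def X_def c_def[symmetric])
  have X: "0 \<le> X" and D: "0 \<le> D"
    using G.integral_G_nonneg G.integral_G_mono[OF tau_c tau(1)] by (simp_all add: X_def D_def c_def)
  note bound = increment_bound[OF A_pos phi \<open>phi \<le> d\<close> e X D D_le budget, folded a_def]
  show "Rhat G t phi tau \<le> d * (1 - a)"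
    using R bound(1) by simp
  assume "d * (1 - a) \<le> Rhat G t phi tau"
  then have "phi = d" "X = d * a" "e = exp (A / d)" using R bound(2) by auto
  then show "phi = d \<and> tau = lo + d \<and> G tau = a"
    using tau(3) d_pos by (auto simp: e_def c_def A_def d_def X_def)
qed

lemma Rhat_le_optimum:
  assumes feas: "feasible lo hi mu F G t phi tau"
  shows "Rhat G t phi tau \<le> d * (1 - a)"
proof (cases "hi \<le> tau \<or> phi = 0 \<or> mu + phi < tau")
  case False
  with Rhat_le_increment(1)[OF feas] have "0 < phi" "tau < hi" "tau \<le> mu + phi" by auto
  then show ?thesis by (rule Rhat_le_optimum_regular(1)[OF feas])
qed (use Rhat_less_optimum_degenerate[OF feas] in simp)

lemma optimum_imp_Gstar:
  assumes feas: "feasible lo hi mu F G t phi tau" and opt: "d * (1 - a) \<le> Rhat G t phi tau"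
  shows "G = Gstar lo hi mu \<and> t = 0 \<and> phi = d"
proof -
  have "\<not> (hi \<le> tau \<or> phi = 0 \<or> mu + phi < tau)"
    using Rhat_less_optimum_degenerate[OF feas] opt by fastforce
  with Rhat_le_increment(1)[OF feas] have "0 < phi" "tau < hi" "tau \<le> mu + phi" by auto
  then have "phi = d" "tau = lo + d" "G tau = a"
    using Rhat_le_optimum_regular(2)[OF feas _ _ _ opt] by auto
  then show ?thesis
    using feasible_eq_Gstar feas opt Rhat_le_optimum[OF feas] by (auto simp: Rhat_def)
qed

end

theorem proposition3:
  fixes lo hi p mu :: real and F G :: "real \<Rightarrow> real" and phi_t phi_d :: real
  assumes "0 \<le> lo" and "lo < hi" and "0 < p" and "p < 1"
    and "F = (\<lambda>x. if x < lo then 0 else if x < hi then p else 1)"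
    and "mu = cdf_mean F"
  shows "robustly_optimal lo hi mu F G phi_t phi_d \<longleftrightarrow>
           (G = Gstar lo hi mu \<and> phi_t = 0 \<and> phi_d = hi - mu)"
proof -
  interpret two_point_prior lo hi p mu F
    using assms(2-6) by unfold_locales
  have optimum: "Rhat G' t' phi' tau' \<le> Rhat (Gstar lo hi mu) 0 d (lo + d)"
    if "feasible lo hi mu F G' t' phi' tau'" for G' t' phi' tau'
    using Rhat_le_optimum[OF that] Rhat_Gstar by simp
  show ?thesis
  proof
    assume "robustly_optimal lo hi mu F G phi_t phi_d"
    then obtain tau where feas: "feasible lo hi mu F G phi_t phi_d tau"
      and "Rhat (Gstar lo hi mu) 0 d (lo + d) \<le> Rhat G phi_t phi_d tau"
      using Gstar_feasible unfolding robustly_optimal_def by blast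
    then show "G = Gstar lo hi mu \<and> phi_t = 0 \<and> phi_d = hi - mu"
      using optimum_imp_Gstar[OF feas] Rhat_Gstar by (simp add: d_def)
  next
    assume "G = Gstar lo hi mu \<and> phi_t = 0 \<and> phi_d = hi - mu"
    then show "robustly_optimal lo hi mu F G phi_t phi_d"
      unfolding robustly_optimal_def using Gstar_feasible optimum by (auto simp: d_def)
  qed
qed

end
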